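(* If a twice-marked graph $(G,u,v)$ has torsion order $2$ and every divisor on $G$ is submodular, then $(G,u,v)$ has $2$-general transmission.
   Context: A graph is a finite, connected, loopless multigraph (parallel edges allowed); its genus is $g=|E(G)|-|V(G)|+1$. A divisor is an element of the free abelian group on $V(G)$. Linear equivalence $\sim$ is generated by chip-firing (firing $w$ subtracts $\mathrm{val}(w)$ chips from $w$ and adds to each other vertex the number of edges joining it to $w$). The rank $r(D)$ is $-1$ if $D$ is not equivalent to an effective divisor, else the largest $r\ge0$ such that $D-E$ is equivalent to an effective divisor for every effective $E$ of degree $r$. $\delta(P)$ is $1$ if $P$ holds and $0$ otherwise. A twice-marked graph $(G,u,v)$ is a graph with two chosen vertices; its torsion order is the least $k\ge1$ with $ku\sim kv$. A twist of $D$ is $D+au+bv$. $\Delta(D)=r(D)-r(D-u)-r(D-v)+r(D-u-v)$. $D$ is submodular if $\Delta(D')\ge0$ for all twists $D'$. If $D$ is submodular, its transmission permutation $\tau^{u,v}_D$ is the unique bijection $\mathbb Z\to\mathbb Z$ with $\delta(\tau^{u,v}_D(b)=a)=\Delta(D+au-bv)$ for all $a,b$. An inversion of a bijection $\tau$ is a pair $(a,b)$ with $a<b$, $\tau(a)>\tau(b)$; two inversions $(a,b),(a',b')$ are $k$-equivalent if $a-a'=b-b'\equiv0\pmod k$; $\mathrm{inv}_k(\tau)$ is the number of classes. A genus-$g$ twice-marked graph has $k$-general transmission if $ku\sim kv$, every divisor is submodular, and $\mathrm{inv}_k(\tau^{u,v}_D)\le g$ for every divisor $D$. *)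

theory Defs
  imports Main "HOL-Library.Extended_Nat"
begin

text \<open>A graph is given by a vertex set V and an edge-multiplicity function m
  (m x y = number of edges joining x and y).\<close>

definition is_graph :: "'v set \<Rightarrow> ('v \<Rightarrow> 'v \<Rightarrow> nat) \<Rightarrow> bool" where
  "is_graph V m \<longleftrightarrow> finite V \<and> V \<noteq> {}
     \<and> (\<forall>x y. m x y = m y x)
     \<and> (\<forall>x. m x x = 0)
     \<and> (\<forall>x y. m x y > 0 \<longrightarrow> x \<in> V \<and> y \<in> V)
     \<and> (\<forall>x\<in>V. \<forall>y\<in>V. (x, y) \<in> {(a, b). m a b > 0}\<^sup>*)"

definition num_edges :: "'v set \<Rightarrow> ('v \<Rightarrow> 'v \<Rightarrow> nat) \<Rightarrow> nat" where
  "num_edges V m = (\<Sum>x\<in>V. \<Sum>y\<in>V. m x y) div 2"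

text \<open>genus g = |E| - |V| + 1 (nonnegative for connected graphs)\<close>
definition genus :: "'v set \<Rightarrow> ('v \<Rightarrow> 'v \<Rightarrow> nat) \<Rightarrow> nat" where
  "genus V m = num_edges V m + 1 - card V"

definition valence :: "'v set \<Rightarrow> ('v \<Rightarrow> 'v \<Rightarrow> nat) \<Rightarrow> 'v \<Rightarrow> nat" where
  "valence V m w = (\<Sum>y\<in>V. m w y)"

definition is_divisor :: "'v set \<Rightarrow> ('v \<Rightarrow> int) \<Rightarrow> bool" where
  "is_divisor V D \<longleftrightarrow> (\<forall>x. x \<notin> V \<longrightarrow> D x = 0)"

definition effective :: "('v \<Rightarrow> int) \<Rightarrow> bool" where
  "effective D \<longleftrightarrow> (\<forall>x. D x \<ge> 0)"

definition degree :: "'v set \<Rightarrow> ('v \<Rightarrow> int) \<Rightarrow> int" where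
  "degree V D = (\<Sum>x\<in>V. D x)"

definition fire :: "'v set \<Rightarrow> ('v \<Rightarrow> 'v \<Rightarrow> nat) \<Rightarrow> 'v \<Rightarrow> 'v \<Rightarrow> int" where
  "fire V m w = (\<lambda>x. if x = w then - int (valence V m w) else int (m w x))"

inductive lin_equiv :: "'v set \<Rightarrow> ('v \<Rightarrow> 'v \<Rightarrow> nat) \<Rightarrow> ('v \<Rightarrow> int) \<Rightarrow> ('v \<Rightarrow> int) \<Rightarrow> bool"
  for V m where
  refl: "lin_equiv V m D D"
| fire_fwd: "lin_equiv V m D E \<Longrightarrow> w \<in> V \<Longrightarrow> lin_equiv V m D (\<lambda>x. E x + fire V m w x)"
| fire_bwd: "lin_equiv V m D E \<Longrightarrow> w \<in> V \<Longrightarrow> lin_equiv V m D (\<lambda>x. E x - fire V m w x)"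

definition equiv_effective :: "'v set \<Rightarrow> ('v \<Rightarrow> 'v \<Rightarrow> nat) \<Rightarrow> ('v \<Rightarrow> int) \<Rightarrow> bool" where
  "equiv_effective V m D \<longleftrightarrow> (\<exists>E. effective E \<and> lin_equiv V m D E)"

definition rank :: "'v set \<Rightarrow> ('v \<Rightarrow> 'v \<Rightarrow> nat) \<Rightarrow> ('v \<Rightarrow> int) \<Rightarrow> int" where
  "rank V m D =
    (if \<not> equiv_effective V m D then -1
     else int (GREATEST r::nat. \<forall>E. is_divisor V E \<and> effective E \<and> degree V E = int r
                 \<longrightarrow> equiv_effective V m (\<lambda>x. D x - E x)))"

definition twist :: "'v \<Rightarrow> 'v \<Rightarrow> ('v \<Rightarrow> int) \<Rightarrow> int \<Rightarrow> int \<Rightarrow> 'v \<Rightarrow> int" where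
  "twist u v D a b = (\<lambda>x. D x + (if x = u then a else 0) + (if x = v then b else 0))"

definition Delta :: "'v set \<Rightarrow> ('v \<Rightarrow> 'v \<Rightarrow> nat) \<Rightarrow> 'v \<Rightarrow> 'v \<Rightarrow> ('v \<Rightarrow> int) \<Rightarrow> int" where
  "Delta V m u v D = rank V m D - rank V m (twist u v D (-1) 0) - rank V m (twist u v D 0 (-1))
      + rank V m (twist u v D (-1) (-1))"

definition submodular :: "'v set \<Rightarrow> ('v \<Rightarrow> 'v \<Rightarrow> nat) \<Rightarrow> 'v \<Rightarrow> 'v \<Rightarrow> ('v \<Rightarrow> int) \<Rightarrow> bool" where
  "submodular V m u v D \<longleftrightarrow> (\<forall>a b. Delta V m u v (twist u v D a b) \<ge> 0)"

text \<open>Transmission permutation (meaningful for submodular D).\<close>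
definition transmission_perm :: "'v set \<Rightarrow> ('v \<Rightarrow> 'v \<Rightarrow> nat) \<Rightarrow> 'v \<Rightarrow> 'v \<Rightarrow> ('v \<Rightarrow> int) \<Rightarrow> int \<Rightarrow> int" where
  "transmission_perm V m u v D = (THE \<tau>. bij \<tau> \<and>
     (\<forall>a b. (if \<tau> b = a then 1 else 0) = Delta V m u v (twist u v D a (- b))))"

definition inversions :: "(int \<Rightarrow> int) \<Rightarrow> (int \<times> int) set" where
  "inversions \<tau> = {(a, b). a < b \<and> \<tau> a > \<tau> b}"

definition k_equiv_rel :: "nat \<Rightarrow> ((int \<times> int) \<times> (int \<times> int)) set" where
  "k_equiv_rel k = {((a, b), (a', b')). a - a' = b - b' \<and> int k dvd (a - a')}"

definition inv_k :: "nat \<Rightarrow> (int \<Rightarrow> int) \<Rightarrow> enat" where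
  "inv_k k \<tau> = (let Q = inversions \<tau> // (k_equiv_rel k \<inter> (inversions \<tau> \<times> inversions \<tau>))
                in if finite Q then enat (card Q) else \<infinity>)"

definition has_torsion_order :: "'v set \<Rightarrow> ('v \<Rightarrow> 'v \<Rightarrow> nat) \<Rightarrow> 'v \<Rightarrow> 'v \<Rightarrow> nat \<Rightarrow> bool" where
  "has_torsion_order V m u v k \<longleftrightarrow> k \<ge> 1
     \<and> lin_equiv V m (twist u v (\<lambda>_. 0) (int k) 0) (twist u v (\<lambda>_. 0) 0 (int k))
     \<and> (\<forall>j. 1 \<le> j \<and> j < k \<longrightarrow>
          \<not> lin_equiv V m (twist u v (\<lambda>_. 0) (int j) 0) (twist u v (\<lambda>_. 0) 0 (int j)))"

definition k_general_transmission :: "'v set \<Rightarrow> ('v \<Rightarrow> 'v \<Rightarrow> nat) \<Rightarrow> 'v \<Rightarrow> 'v \<Rightarrow> nat \<Rightarrow> bool" where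
  "k_general_transmission V m u v k \<longleftrightarrow>
     lin_equiv V m (twist u v (\<lambda>_. 0) (int k) 0) (twist u v (\<lambda>_. 0) 0 (int k))
     \<and> (\<forall>D. is_divisor V D \<longrightarrow> submodular V m u v D)
     \<and> (\<forall>D. is_divisor V D \<longrightarrow> inv_k k (transmission_perm V m u v D) \<le> enat (genus V m))"

end

theory Submission
  imports Defs "HOL-Library.Indicator_Function"
begin

text \<open>Since 2u ~ 2v, the function (a, b) \<mapsto> r(D + a u - b v) is invariant under
  (a, b) \<mapsto> (a + 2, b + 2), so the transmission permutation satisfies
  tau (b + 2) = tau b + 2 and is determined by tau 0 and tau 1. Riemann-Roch in extreme degrees
  (rank -1 in negative degree, rank deg - g in degree at least 2g - 1, the latter via reduced
  divisors and a non-effective divisor of degree g - 1 built from an acyclic orientation) confines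
  tau b - b to a window of width 2g; for a 2-periodic permutation this allows at most g classes
  of inversions.\<close>

definition point_divisor :: "'v \<Rightarrow> int \<Rightarrow> 'v \<Rightarrow> int" where
  "point_divisor q c = (\<lambda>x. if x = q then c else 0)"

lemma effective_point_divisor: "0 \<le> c \<Longrightarrow> effective (point_divisor q c)"
  unfolding effective_def point_divisor_def by simp

lemma divisor_point_divisor: "q \<in> V \<Longrightarrow> is_divisor V (point_divisor q c)"
  unfolding is_divisor_def point_divisor_def by auto

lemma degree_point_divisor: "finite V \<Longrightarrow> q \<in> V \<Longrightarrow> degree V (point_divisor q c) = c"
  unfolding degree_def point_divisor_def by simp

lemma degree_diff: "degree V (\<lambda>x. D x - E x) = degree V D - degree V E"
  unfolding degree_def by (simp add: sum_subtractf)

lemma degree_add: "degree V (\<lambda>x. D x + E x) = degree V D + degree V E"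
  unfolding degree_def by (simp add: sum.distrib)

lemma divisor_diff: "is_divisor V D \<Longrightarrow> is_divisor V E \<Longrightarrow> is_divisor V (\<lambda>x. D x - E x)"
  unfolding is_divisor_def by simp

lemma divisor_add: "is_divisor V D \<Longrightarrow> is_divisor V E \<Longrightarrow> is_divisor V (\<lambda>x. D x + E x)"
  unfolding is_divisor_def by simp

lemma twist_twist: "twist u v (twist u v D a b) c d = twist u v D (a + c) (b + d)"
  by (simp add: twist_def fun_eq_iff algebra_simps)

lemma divisor_twist: "u \<in> V \<Longrightarrow> v \<in> V \<Longrightarrow> is_divisor V D \<Longrightarrow> is_divisor V (twist u v D a b)"
  unfolding is_divisor_def twist_def by auto

lemma degree_twist:
  assumes "finite V" "u \<in> V" "v \<in> V"
  shows "degree V (twist u v D a b) = degree V D + a + b"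
  using assms unfolding degree_def twist_def by (simp add: sum.distrib)

section \<open>Chip-firing\<close>

locale multigraph =
  fixes V :: "'v set" and m :: "'v \<Rightarrow> 'v \<Rightarrow> nat"
  assumes graph: "is_graph V m"
begin

lemma finite_V: "finite V"
  using graph by (simp add: is_graph_def)

lemma V_nonempty: "V \<noteq> {}"
  using graph by (simp add: is_graph_def)

lemma m_sym: "m x y = m y x"
  using graph by (simp add: is_graph_def)

lemma m_loop: "m x x = 0"
  using graph by (simp add: is_graph_def)

lemma m_outside: "x \<notin> V \<or> y \<notin> V \<Longrightarrow> m x y = 0"
  using graph unfolding is_graph_def by (metis gr0I)

lemma connected: "x \<in> V \<Longrightarrow> y \<in> V \<Longrightarrow> (x, y) \<in> {(a, b). 0 < m a b}\<^sup>*"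
  using graph by (simp add: is_graph_def)

definition firing :: "('v \<Rightarrow> int) \<Rightarrow> 'v \<Rightarrow> int" where
  "firing \<sigma> x = (\<Sum>w\<in>V. \<sigma> w * fire V m w x)"

lemma firing_eq: "firing \<sigma> x = (\<Sum>w\<in>V. int (m x w) * (\<sigma> w - \<sigma> x))"
proof -
  have summand: "\<sigma> w * fire V m w x
      = int (m x w) * \<sigma> w - (if w = x then \<sigma> x * int (valence V m x) else 0)" for w
    using m_sym[of x w] m_loop[of x] by (auto simp: fire_def)
  have "(\<Sum>w\<in>V. int (m x w)) = (if x \<in> V then int (valence V m x) else 0)"
    using m_outside[of x] by (auto simp: valence_def)
  then have "firing \<sigma> x = (\<Sum>w\<in>V. int (m x w) * \<sigma> w) - \<sigma> x * (\<Sum>w\<in>V. int (m x w))"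
    unfolding firing_def summand using finite_V by (simp add: sum_subtractf sum.delta')
  then show ?thesis
    by (simp add: sum_distrib_left sum_subtractf algebra_simps)
qed

lemma firing_outside: "x \<notin> V \<Longrightarrow> firing \<sigma> x = 0"
  by (simp add: firing_eq m_outside)

lemma firing_add: "firing (\<lambda>w. \<sigma> w + \<rho> w) x = firing \<sigma> x + firing \<rho> x"
  unfolding firing_def by (simp add: distrib_right sum.distrib)

lemma firing_uminus: "firing (\<lambda>w. - \<sigma> w) x = - firing \<sigma> x"
  unfolding firing_def by (simp add: sum_negf)

lemma firing_single: "w \<in> V \<Longrightarrow> firing (\<lambda>y. if y = w then c else 0) x = c * fire V m w x"
  unfolding firing_def
  by (subst sum.cong[OF HOL.refl, of _ _ "\<lambda>y. if y = w then c * fire V m w x else 0"]) (auto simp: finite_V)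

lemma lin_equiv_imp_firing:
  "lin_equiv V m D E \<Longrightarrow> \<exists>\<sigma>. E = (\<lambda>x. D x + firing \<sigma> x)"
proof (induction rule: lin_equiv.induct)
  case refl
  show ?case by (rule exI[of _ "\<lambda>_. 0"]) (simp add: firing_def)
next
  case (fire_fwd D E w)
  then obtain \<sigma> where "E = (\<lambda>x. D x + firing \<sigma> x)" by blast
  with fire_fwd show ?case
    by (intro exI[of _ "\<lambda>y. \<sigma> y + (if y = w then 1 else 0)"]) (simp add: firing_add firing_single add.assoc)
next
  case (fire_bwd D E w)
  then obtain \<sigma> where "E = (\<lambda>x. D x + firing \<sigma> x)" by blast
  with fire_bwd show ?case
    by (intro exI[of _ "\<lambda>y. \<sigma> y + (if y = w then -1 else 0)"]) (simp add: firing_add firing_single algebra_simps)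
qed

lemma lin_equiv_fire_multiple:
  assumes "w \<in> V" "lin_equiv V m D E"
  shows "lin_equiv V m D (\<lambda>x. E x + c * fire V m w x)"
proof -
  have fwd: "lin_equiv V m D (\<lambda>x. E x + int n * fire V m w x)" for n
  proof (induction n)
    case (Suc n)
    from lin_equiv.fire_fwd[OF Suc assms(1)] show ?case by (simp add: algebra_simps)
  qed (simp add: assms)
  have bwd: "lin_equiv V m D (\<lambda>x. E x - int n * fire V m w x)" for n
  proof (induction n)
    case (Suc n)
    from lin_equiv.fire_bwd[OF Suc assms(1)] show ?case by (simp add: algebra_simps)
  qed (simp add: assms)
  show ?thesis
    using fwd[of "nat c"] bwd[of "nat (- c)"] by (cases "c \<ge> 0") simp_all
qed

lemma lin_equiv_firing: "lin_equiv V m D (\<lambda>x. D x + firing \<sigma> x)"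
proof -
  have "lin_equiv V m D (\<lambda>x. D x + (\<Sum>w\<in>A. \<sigma> w * fire V m w x))" if "finite A" "A \<subseteq> V" for A
    using that
  proof (induction A rule: finite_induct)
    case empty
    show ?case by (simp add: lin_equiv.refl)
  next
    case (insert w A)
    then have "lin_equiv V m D (\<lambda>x. D x + (\<Sum>w\<in>A. \<sigma> w * fire V m w x))" by simp
    from lin_equiv_fire_multiple[OF _ this, of w "\<sigma> w"] insert show ?case
      by (simp add: algebra_simps)
  qed
  then show ?thesis
    unfolding firing_def using finite_V by blast
qed

lemma lin_equiv_iff_firing: "lin_equiv V m D E \<longleftrightarrow> (\<exists>\<sigma>. E = (\<lambda>x. D x + firing \<sigma> x))"
  using lin_equiv_imp_firing lin_equiv_firing by blast

lemma lin_equiv_sym: "lin_equiv V m D E \<Longrightarrow> lin_equiv V m E D"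
  unfolding lin_equiv_iff_firing
proof (elim exE)
  fix \<sigma> assume "E = (\<lambda>x. D x + firing \<sigma> x)"
  then show "\<exists>\<rho>. D = (\<lambda>x. E x + firing \<rho> x)"
    by (intro exI[of _ "\<lambda>w. - \<sigma> w"]) (simp add: firing_uminus)
qed

lemma lin_equiv_trans: "lin_equiv V m D E \<Longrightarrow> lin_equiv V m E F \<Longrightarrow> lin_equiv V m D F"
  unfolding lin_equiv_iff_firing by (auto simp: firing_add[symmetric] add.assoc)

lemma lin_equiv_add: "lin_equiv V m D E \<Longrightarrow> lin_equiv V m (\<lambda>x. D x + F x) (\<lambda>x. E x + F x)"
  unfolding lin_equiv_iff_firing by (auto simp: algebra_simps)

lemma sum_firing: "(\<Sum>x\<in>V. firing \<sigma> x) = 0"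
proof -
  have "(\<Sum>x\<in>V. \<Sum>w\<in>V. int (m x w) * \<sigma> w) = (\<Sum>x\<in>V. \<Sum>w\<in>V. int (m x w) * \<sigma> x)"
    by (subst sum.swap) (simp add: m_sym)
  then show ?thesis
    by (simp add: firing_eq algebra_simps sum_subtractf)
qed

lemma sum_firing_mult_commute: "(\<Sum>x\<in>V. firing \<sigma> x * f x) = (\<Sum>x\<in>V. \<sigma> x * firing f x)"
proof -
  have "(\<Sum>x\<in>V. \<Sum>w\<in>V. int (m x w) * \<sigma> w * f x) = (\<Sum>x\<in>V. \<Sum>w\<in>V. int (m x w) * f w * \<sigma> x)"
    by (subst sum.swap) (simp add: m_sym mult.commute mult.left_commute)
  then show ?thesis
    by (simp add: firing_eq sum_distrib_right sum_distrib_left algebra_simps sum_subtractf)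
qed

lemma lin_equiv_degree: "lin_equiv V m D E \<Longrightarrow> degree V E = degree V D"
  unfolding lin_equiv_iff_firing degree_def by (auto simp: sum.distrib sum_firing)

lemma lin_equiv_divisor: "lin_equiv V m D E \<Longrightarrow> is_divisor V D \<Longrightarrow> is_divisor V E"
  unfolding lin_equiv_iff_firing is_divisor_def by (auto simp: firing_outside)

section \<open>Reduced divisors\<close>

definition total_valence :: nat where
  "total_valence = (\<Sum>x\<in>V. valence V m x)"

lemma valence_le_total: "x \<in> V \<Longrightarrow> valence V m x \<le> total_valence"
  unfolding total_valence_def using finite_V by (intro member_le_sum) auto

definition height :: "'v \<Rightarrow> 'v \<Rightarrow> nat" where
  "height q x = (LEAST n. (x, q) \<in> {(a, b). 0 < m a b} ^^ n)"

lemma height_self: "height q q = 0"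
  unfolding height_def by (rule Least_eq_0) simp

lemma height_descent:
  assumes "q \<in> V" "x \<in> V" "x \<noteq> q"
  shows "\<exists>y\<in>V. 0 < m x y \<and> height q y < height q x"
proof -
  let ?E = "{(a, b). 0 < m a b}"
  have "\<exists>n. (x, q) \<in> ?E ^^ n"
    using connected[OF assms(2,1)] by (simp add: rtrancl_power)
  then have path: "(x, q) \<in> ?E ^^ height q x"
    unfolding height_def by (rule LeastI_ex)
  then obtain n where n: "height q x = Suc n"
    using assms(3) by (cases "height q x") auto
  then obtain y where y: "(x, y) \<in> ?E" "(y, q) \<in> ?E ^^ n"
    using path relpow_Suc_D2 by metis
  then have "height q y \<le> n"
    unfolding height_def by (auto intro: Least_le)
  moreover have "y \<in> V"
    using y(1) m_outside[of x y] by auto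
  ultimately show ?thesis
    using y(1) n by force
qed

definition weight :: "int \<Rightarrow> 'v \<Rightarrow> 'v \<Rightarrow> int" where
  "weight K q x = K ^ (Max (height q ` V) - height q x)"

lemma weight_ge_1: "1 \<le> K \<Longrightarrow> 1 \<le> weight K q x"
  unfolding weight_def by simp

lemma weight_le_root: "1 \<le> K \<Longrightarrow> weight K q x \<le> weight K q q"
  unfolding weight_def height_self by (rule power_increasing) simp_all

text \<open>Each vertex other than the root has a neighbour one level closer to the root, whose
  weight is at least K times its own; this single edge outweighs all others once K exceeds the
  valence.\<close>

lemma firing_weight_ge:
  assumes K: "1 \<le> K" and "q \<in> V" "x \<in> V" "x \<noteq> q"
  shows "(K - int (valence V m x)) * weight K q x \<le> firing (weight K q) x"
proof -
  let ?w = "weight K q"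
  obtain y where y: "y \<in> V" "0 < m x y" "height q y < height q x"
    using height_descent assms(2-4) by blast
  have "height q x \<le> Max (height q ` V)"
    using \<open>x \<in> V\<close> finite_V by simp
  then have "Suc (Max (height q ` V) - height q x) \<le> Max (height q ` V) - height q y"
    using y(3) by linarith
  then have "K * ?w x \<le> ?w y"
    unfolding weight_def using K power_increasing by fastforce
  also have "\<dots> \<le> int (m x y) * ?w y"
    using y(2) weight_ge_1[OF K, of q y] by (simp add: mult_le_cancel_right1)
  finally have "K * ?w x \<le> int (m x y) * ?w y" .
  then have summand: "(if w = y then K * ?w x else 0) - int (m x w) * ?w x \<le> int (m x w) * (?w w - ?w x)"
    for w using weight_ge_1[OF K, of q w] by (cases "w = y") (auto simp: algebra_simps)
  have "(\<Sum>w\<in>V. int (m x w) * ?w x) = int (valence V m x) * ?w x"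
    by (simp add: valence_def sum_distrib_right)
  then have "(K - int (valence V m x)) * ?w x = (\<Sum>w\<in>V. (if w = y then K * ?w x else 0) - int (m x w) * ?w x)"
    using y(1) finite_V by (simp add: sum_subtractf left_diff_distrib)
  also have "\<dots> \<le> firing ?w x"
    unfolding firing_eq by (rule sum_mono) (rule summand)
  finally show ?thesis .
qed

lemma lin_equiv_nonneg_off:
  assumes "q \<in> V"
  shows "\<exists>D'. lin_equiv V m D D' \<and> (\<forall>x\<in>V - {q}. 0 \<le> D' x)"
proof -
  define K where "K = 1 + int total_valence + (\<Sum>x\<in>V. \<bar>D x\<bar>)"
  have "0 \<le> D x + firing (weight K q) x" if x: "x \<in> V - {q}" for x
  proof -
    have "\<bar>D x\<bar> \<le> (\<Sum>x\<in>V. \<bar>D x\<bar>)"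
      using x finite_V by (intro member_le_sum) auto
    moreover have "int (valence V m x) \<le> int total_valence"
      using x valence_le_total by simp
    ultimately have K_ge: "1 - D x \<le> K - int (valence V m x)" "0 \<le> K - int (valence V m x)"
      unfolding K_def by (smt (verit) abs_ge_self abs_ge_zero)+
    then have "K - int (valence V m x) \<le> (K - int (valence V m x)) * weight K q x"
      using weight_ge_1[of K q x] by (simp add: mult_le_cancel_left1)
    also have "\<dots> \<le> firing (weight K q) x"
      using x assms by (intro firing_weight_ge) (auto simp: K_def)
    finally show ?thesis using K_ge(1) by linarith
  qed
  then show ?thesis
    using lin_equiv_firing by blast
qed

lemma firing_indicator_mem:
  assumes "x \<in> S"
  shows "firing (indicator S) x = - (\<Sum>y\<in>V - S. int (m x y))"
proof -
  have "firing (indicator S) x = (\<Sum>w\<in>V. if w \<in> S then 0 else - int (m x w))"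
    unfolding firing_eq using assms by (intro sum.cong) auto
  also have "\<dots> = (\<Sum>w\<in>V - S. - int (m x w))"
    by (simp add: sum.If_cases finite_V Diff_eq)
  finally show ?thesis
    by (simp add: sum_negf)
qed

lemma firing_indicator_nonneg: "x \<notin> S \<Longrightarrow> 0 \<le> firing (indicator S) x"
  unfolding firing_eq by (intro sum_nonneg) (simp add: indicator_def)

definition potential :: "'v \<Rightarrow> ('v \<Rightarrow> int) \<Rightarrow> int" where
  "potential q D = (\<Sum>x\<in>V. D x * weight (int total_valence + 1) q x)"

lemma potential_le:
  assumes "q \<in> V" "\<forall>x\<in>V - {q}. 0 \<le> D x"
  shows "potential q D \<le> weight (int total_valence + 1) q q * degree V D"
proof -
  let ?w = "weight (int total_valence + 1) q"
  have "D x * ?w x \<le> D x * ?w q" if "x \<in> V" for x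
    using assms that weight_le_root[of "int total_valence + 1" q x]
    by (cases "x = q") (auto intro: mult_left_mono)
  then have "potential q D \<le> (\<Sum>x\<in>V. D x * ?w q)"
    unfolding potential_def by (rule sum_mono)
  then show ?thesis
    by (simp add: degree_def sum_distrib_right mult.commute)
qed

lemma potential_fire_set_less:
  assumes "q \<in> V" "S \<noteq> {}" "S \<subseteq> V - {q}"
  shows "potential q D < potential q (\<lambda>x. D x + firing (indicator S) x)"
proof -
  let ?K = "int total_valence + 1"
  let ?w = "weight ?K q"
  have fin_S: "finite S"
    using assms(3) finite_V finite_subset by blast
  have "1 \<le> firing ?w x" if "x \<in> S" for x
  proof -
    have "1 \<le> ?K - int (valence V m x)"
      using that assms(3) valence_le_total[of x] by force
    then have "1 \<le> (?K - int (valence V m x)) * ?w x"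
      using weight_ge_1[of ?K q x] mult_mono[of 1 _ 1 "?w x"] by simp
    also have "\<dots> \<le> firing ?w x"
      using that assms by (intro firing_weight_ge) auto
    finally show ?thesis .
  qed
  then have "int (card S) \<le> (\<Sum>x\<in>S. firing ?w x)"
    using sum_mono[of S "\<lambda>_. 1::int"] by simp
  also have "\<dots> = (\<Sum>x\<in>V. indicator S x * firing ?w x)"
  proof -
    have "V \<inter> S = S"
      using assms(3) by blast
    then show ?thesis
      using finite_V by simp
  qed
  also have "\<dots> = (\<Sum>x\<in>V. firing (indicator S) x * ?w x)"
    by (rule sum_firing_mult_commute[symmetric])
  also have "\<dots> = potential q (\<lambda>x. D x + firing (indicator S) x) - potential q D"
    by (simp add: potential_def algebra_simps sum.distrib)
  finally show ?thesis
    using assms(2) fin_S card_gt_0_iff[of S] by linarith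
qed

definition reduced :: "'v \<Rightarrow> ('v \<Rightarrow> int) \<Rightarrow> bool" where
  "reduced q D \<longleftrightarrow> (\<forall>x\<in>V - {q}. 0 \<le> D x) \<and>
     (\<forall>S. S \<noteq> {} \<longrightarrow> S \<subseteq> V - {q} \<longrightarrow> (\<exists>x\<in>S. D x < (\<Sum>y\<in>V - S. int (m x y))))"

text \<open>A divisor equivalent to D, nonnegative off q and of maximal potential, admits no
  legal set-firing, since firing would raise the potential.\<close>

lemma ex_reduced:
  assumes "q \<in> V"
  shows "\<exists>D'. lin_equiv V m D D' \<and> reduced q D'"
proof -
  let ?P = "\<lambda>D'. lin_equiv V m D D' \<and> (\<forall>x\<in>V - {q}. 0 \<le> D' x)"
  define B where "B = weight (int total_valence + 1) q q * degree V D"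
  have bound: "potential q D' \<le> B" if "?P D'" for D'
  proof -
    have "degree V D' = degree V D"
      using that lin_equiv_degree by blast
    then show ?thesis
      using potential_le[OF assms, of D'] that unfolding B_def by simp
  qed
  obtain D0 where "?P D0"
    using lin_equiv_nonneg_off[OF assms] by blast
  then obtain D' where D': "?P D'"
    and least: "\<And>D''. ?P D'' \<Longrightarrow> nat (B - potential q D') \<le> nat (B - potential q D'')"
    using ex_has_least_nat[of ?P D0 "\<lambda>D'. nat (B - potential q D')"] by blast
  have "\<exists>x\<in>S. D' x < (\<Sum>y\<in>V - S. int (m x y))" if S: "S \<noteq> {}" "S \<subseteq> V - {q}" for S
  proof (rule ccontr)
    assume "\<not> ?thesis"
    then have legal: "\<forall>x\<in>S. (\<Sum>y\<in>V - S. int (m x y)) \<le> D' x"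
      by (simp add: not_less)
    define D'' where "D'' = (\<lambda>x. D' x + firing (indicator S) x)"
    have "lin_equiv V m D D''"
      unfolding D''_def using D' lin_equiv_trans lin_equiv_firing by blast
    moreover have "0 \<le> D'' x" if "x \<in> V - {q}" for x
      using that D' legal firing_indicator_mem[of x S] firing_indicator_nonneg[of x S]
      unfolding D''_def by (cases "x \<in> S") auto
    ultimately have "?P D''" by blast
    then have "B - potential q D' \<le> B - potential q D''"
      using least bound D' by (simp add: nat_le_eq_zle)
    then show False
      using potential_fire_set_less[OF assms S, of D'] unfolding D''_def by linarith
  qed
  then show ?thesis
    using D' unfolding reduced_def by blast
qed

text \<open>Twice the number of edges with an endpoint in T: edges inside T are counted from both
  ends by the first sum, edges leaving T once by each sum.\<close>

definition double_edges_meeting :: "'v set \<Rightarrow> int" where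
  "double_edges_meeting T = (\<Sum>x\<in>T. int (valence V m x)) + (\<Sum>x\<in>T. \<Sum>y\<in>V - T. int (m x y))"

lemma double_edges_meeting_remove:
  assumes "T \<subseteq> V" "v \<in> T"
  shows "double_edges_meeting T = double_edges_meeting (T - {v}) + 2 * (\<Sum>y\<in>V - T. int (m v y))"
proof -
  have fin_T: "finite T"
    using assms(1) finite_V finite_subset by blast
  have V_minus: "V - (T - {v}) = insert v (V - T)"
    using assms by auto
  have "(\<Sum>x\<in>T. int (valence V m x)) = int (valence V m v) + (\<Sum>x\<in>T - {v}. int (valence V m x))"
    using fin_T assms(2) by (simp add: sum.remove)
  moreover have "int (valence V m v) = (\<Sum>y\<in>V - T. int (m v y)) + (\<Sum>y\<in>T - {v}. int (m v y))"
    using sum.subset_diff[OF assms(1) finite_V, of "\<lambda>y. int (m v y)"] fin_T assms(2) m_loop[of v]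
    by (simp add: valence_def sum.remove)
  moreover have "(\<Sum>x\<in>T. \<Sum>y\<in>V - T. int (m x y))
      = (\<Sum>y\<in>V - T. int (m v y)) + (\<Sum>x\<in>T - {v}. \<Sum>y\<in>V - T. int (m x y))"
    using fin_T assms(2) by (simp add: sum.remove)
  moreover have "(\<Sum>x\<in>T - {v}. \<Sum>y\<in>V - (T - {v}). int (m x y))
      = (\<Sum>y\<in>T - {v}. int (m v y)) + (\<Sum>x\<in>T - {v}. \<Sum>y\<in>V - T. int (m x y))"
    unfolding V_minus using finite_V assms(2) by (simp add: sum.distrib m_sym)
  ultimately show ?thesis
    unfolding double_edges_meeting_def by linarith
qed

lemma double_edges_meeting_all:
  assumes "q \<in> V"
  shows "double_edges_meeting (V - {q}) = int total_valence"
proof -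
  have "V - (V - {q}) = {q}"
    using assms by auto
  moreover have "(\<Sum>x\<in>V - {q}. int (valence V m x)) = int total_valence - int (valence V m q)"
    using sum_diff1[OF finite_V, of "\<lambda>x. int (valence V m x)" q] assms
    by (simp add: total_valence_def)
  moreover have "(\<Sum>x\<in>V - {q}. int (m x q)) = int (valence V m q)"
    using sum_diff1[OF finite_V, of "\<lambda>x. int (m x q)" q] assms m_loop[of q]
    by (simp add: valence_def m_sym)
  ultimately show ?thesis
    unfolding double_edges_meeting_def by simp
qed

text \<open>Peeling off, one at a time, a vertex that cannot fire.\<close>

lemma reduced_sum_bound:
  assumes "reduced q D" "T \<subseteq> V - {q}"
  shows "2 * (\<Sum>x\<in>T. D x) + 2 * int (card T) \<le> double_edges_meeting T"
  using assms(2)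
proof (induction "card T" arbitrary: T rule: less_induct)
  case less
  show ?case
  proof (cases "T = {}")
    case True
    then show ?thesis by (simp add: double_edges_meeting_def)
  next
    case False
    have fin_T: "finite T"
      using less.prems finite_V finite_subset by blast
    obtain v where v: "v \<in> T" "D v < (\<Sum>y\<in>V - T. int (m v y))"
      using assms(1) False less.prems unfolding reduced_def by blast
    have "2 * (\<Sum>x\<in>T - {v}. D x) + 2 * int (card (T - {v})) \<le> double_edges_meeting (T - {v})"
      using less.hyps[OF card_Diff1_less[OF fin_T v(1)]] less.prems by blast
    moreover have "(\<Sum>x\<in>T. D x) = D v + (\<Sum>x\<in>T - {v}. D x)"
      using fin_T v(1) by (simp add: sum.remove)
    moreover have "int (card T) = int (card (T - {v})) + 1"
      using card_Suc_Diff1[OF fin_T v(1)] by simp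
    moreover have "double_edges_meeting T
        = double_edges_meeting (T - {v}) + 2 * (\<Sum>y\<in>V - T. int (m v y))"
      using double_edges_meeting_remove less.prems v(1) by blast
    ultimately show ?thesis
      using v(2) by linarith
  qed
qed

lemma reduced_zero:
  assumes "q \<in> V"
  shows "reduced q (\<lambda>_. 0)"
  unfolding reduced_def
proof (intro conjI ballI allI impI)
  fix S assume S: "S \<noteq> {}" "S \<subseteq> V - {q}"
  then obtain x where x: "x \<in> S" "\<And>z. z \<in> S \<Longrightarrow> height q x \<le> height q z"
    using ex_has_least_nat[of "\<lambda>x. x \<in> S" _ "height q"] by blast
  then obtain y where y: "y \<in> V" "0 < m x y" "height q y < height q x"
    using height_descent[OF assms] S by blast
  then have "y \<in> V - S"
    using x(2) by force
  then have "int (m x y) \<le> (\<Sum>y\<in>V - S. int (m x y))"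
    using finite_V by (intro member_le_sum) auto
  then show "\<exists>x\<in>S. 0 < (\<Sum>y\<in>V - S. int (m x y))"
    using x(1) y(2) by force
qed simp

definition indegree :: "('v \<Rightarrow> nat) \<Rightarrow> 'v \<Rightarrow> int" where
  "indegree idx x = (\<Sum>y\<in>V. if idx y < idx x then int (m x y) else 0)"

lemma total_valence_eq_sum_indegree:
  assumes "inj_on idx V"
  shows "int total_valence = 2 * (\<Sum>x\<in>V. indegree idx x)"
proof -
  have split: "int (m x y) = (if idx y < idx x then int (m x y) else 0) + (if idx x < idx y then int (m x y) else 0)"
    if "x \<in> V" "y \<in> V" for x y
    using inj_on_eq_iff[OF assms that] m_loop[of x] by (cases "idx x" "idx y" rule: linorder_cases) auto
  have "int total_valence = (\<Sum>x\<in>V. \<Sum>y\<in>V. int (m x y))"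
    by (simp add: total_valence_def valence_def)
  also have "\<dots> = (\<Sum>x\<in>V. indegree idx x) + (\<Sum>x\<in>V. \<Sum>y\<in>V. if idx x < idx y then int (m x y) else 0)"
    unfolding indegree_def by (simp add: split sum.distrib cong: sum.cong)
  also have "(\<Sum>x\<in>V. \<Sum>y\<in>V. if idx x < idx y then int (m x y) else 0) = (\<Sum>x\<in>V. indegree idx x)"
    unfolding indegree_def by (subst sum.swap) (intro sum.cong HOL.refl, metis m_sym)
  finally show ?thesis by simp
qed

lemma total_valence_eq: "total_valence = 2 * num_edges V m"
proof -
  obtain idx :: "'v \<Rightarrow> nat" where "inj_on idx V"
    using finite_imp_inj_to_nat_seg[OF finite_V] by blast
  then have "even total_valence"
    using total_valence_eq_sum_indegree by presburger
  then show ?thesis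
    by (simp add: num_edges_def total_valence_def valence_def)
qed

lemma card_le_num_edges: "card V \<le> num_edges V m + 1"
proof -
  obtain q where q: "q \<in> V"
    using V_nonempty by blast
  have "2 * int (card (V - {q})) \<le> int total_valence"
    using reduced_sum_bound[OF reduced_zero[OF q], of "V - {q}"] double_edges_meeting_all[OF q] by simp
  moreover have "card (V - {q}) + 1 = card V"
    using card_Suc_Diff1[OF finite_V q] by simp
  ultimately show ?thesis
    using total_valence_eq by linarith
qed

lemma genus_eq: "int (genus V m) = int (num_edges V m) + 1 - int (card V)"
  using card_le_num_edges unfolding genus_def by linarith

lemma equiv_effective_if_genus_le_degree:
  assumes D: "is_divisor V D" and deg: "int (genus V m) \<le> degree V D"
  shows "equiv_effective V m D"
proof -
  obtain q where q: "q \<in> V"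
    using V_nonempty by blast
  obtain D' where D': "lin_equiv V m D D'" "reduced q D'"
    using ex_reduced[OF q] by blast
  have "2 * (\<Sum>x\<in>V - {q}. D' x) + 2 * int (card (V - {q})) \<le> int total_valence"
    using reduced_sum_bound[OF D'(2), of "V - {q}"] double_edges_meeting_all[OF q] by simp
  then have "(\<Sum>x\<in>V - {q}. D' x) \<le> int (genus V m)"
    using card_Suc_Diff1[OF finite_V q] total_valence_eq genus_eq by simp
  moreover have "degree V D' = D' q + (\<Sum>x\<in>V - {q}. D' x)"
    unfolding degree_def using q finite_V by (simp add: sum.remove)
  ultimately have "0 \<le> D' q"
    using lin_equiv_degree[OF D'(1)] deg by linarith
  moreover have "is_divisor V D'"
    using lin_equiv_divisor[OF D'(1) D] .
  ultimately have "effective D'"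
    using D'(2) unfolding effective_def reduced_def is_divisor_def by (metis DiffI empty_iff insertE order_refl)
  then show ?thesis
    using D'(1) unfolding equiv_effective_def by blast
qed

text \<open>The divisor of an acyclic orientation minus the all-ones divisor has degree g - 1 and is
  not equivalent to an effective one: at a vertex where a firing script is maximal and earliest,
  the firing loses at least its indegree.\<close>

definition orientation_divisor :: "('v \<Rightarrow> nat) \<Rightarrow> 'v \<Rightarrow> int" where
  "orientation_divisor idx x = (if x \<in> V then indegree idx x - 1 else 0)"

lemma degree_orientation_divisor:
  assumes "inj_on idx V"
  shows "degree V (orientation_divisor idx) = int (genus V m) - 1"
proof -
  have "degree V (orientation_divisor idx) = (\<Sum>x\<in>V. indegree idx x) - int (card V)"
    unfolding degree_def orientation_divisor_def by (simp add: sum_subtractf)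
  then show ?thesis
    using total_valence_eq_sum_indegree[OF assms] total_valence_eq genus_eq by linarith
qed

lemma not_equiv_effective_orientation_divisor:
  "\<not> equiv_effective V m (orientation_divisor idx)"
proof
  assume "equiv_effective V m (orientation_divisor idx)"
  then obtain \<sigma> where eff: "effective (\<lambda>x. orientation_divisor idx x + firing \<sigma> x)"
    unfolding equiv_effective_def lin_equiv_iff_firing by blast
  define M where "M = Max (\<sigma> ` V)"
  have le_M: "\<sigma> w \<le> M" if "w \<in> V" for w
    using finite_V that M_def by simp
  have "M \<in> \<sigma> ` V"
    unfolding M_def using finite_V V_nonempty by (intro Max_in) auto
  then obtain x0 where x0: "x0 \<in> V" "\<sigma> x0 = M"
    "\<And>y. y \<in> V \<Longrightarrow> \<sigma> y = M \<Longrightarrow> idx x0 \<le> idx y"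
    using ex_has_least_nat[of "\<lambda>x. x \<in> V \<and> \<sigma> x = M" _ idx] by blast
  have summand: "int (m x0 w) * (\<sigma> w - \<sigma> x0) \<le> (if idx w < idx x0 then - int (m x0 w) else 0)"
    if w: "w \<in> V" for w
  proof (cases "idx w < idx x0")
    case True
    then have "\<sigma> w - \<sigma> x0 \<le> -1"
      using x0 le_M[OF w] w by force
    then show ?thesis
      using True mult_left_mono[of _ "-1" "int (m x0 w)"] by simp
  next
    case False
    then show ?thesis
      using le_M[OF w] x0(2) by (simp add: mult_nonneg_nonpos)
  qed
  have "firing \<sigma> x0 \<le> (\<Sum>w\<in>V. if idx w < idx x0 then - int (m x0 w) else 0)"
    unfolding firing_eq by (intro sum_mono summand)
  also have "\<dots> = - indegree idx x0"
    unfolding indegree_def by (simp add: sum_negf[symmetric] if_distrib cong: if_cong)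
  finally have "orientation_divisor idx x0 + firing \<sigma> x0 < 0"
    using x0(1) by (simp add: orientation_divisor_def)
  then show False
    using eff unfolding effective_def by (meson not_less)
qed

lemma ex_not_equiv_effective_degree_genus_minus_1:
  "\<exists>N. is_divisor V N \<and> degree V N = int (genus V m) - 1 \<and> \<not> equiv_effective V m N"
proof -
  obtain idx :: "'v \<Rightarrow> nat" where "inj_on idx V"
    using finite_imp_inj_to_nat_seg[OF finite_V] by blast
  moreover have "is_divisor V (orientation_divisor idx)"
    unfolding is_divisor_def orientation_divisor_def by simp
  ultimately show ?thesis
    using degree_orientation_divisor not_equiv_effective_orientation_divisor by blast
qed

section \<open>Rank in extreme degrees\<close>

lemma equiv_effective_lin_equiv:
  "lin_equiv V m D D' \<Longrightarrow> equiv_effective V m D \<longleftrightarrow> equiv_effective V m D'"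
  unfolding equiv_effective_def using lin_equiv_trans lin_equiv_sym by blast

lemma equiv_effective_add_effective:
  assumes "equiv_effective V m D" "effective E"
  shows "equiv_effective V m (\<lambda>x. D x + E x)"
proof -
  obtain F where F: "effective F" "lin_equiv V m D F"
    using assms(1) unfolding equiv_effective_def by blast
  have "effective (\<lambda>x. F x + E x)"
    using F(1) assms(2) unfolding effective_def by (simp add: add_nonneg_nonneg)
  then show ?thesis
    using lin_equiv_add[OF F(2), of E] unfolding equiv_effective_def by blast
qed

lemma degree_nonneg_if_equiv_effective:
  assumes "equiv_effective V m D"
  shows "0 \<le> degree V D"
proof -
  obtain E where E: "effective E" "lin_equiv V m D E"
    using assms unfolding equiv_effective_def by blast
  have "0 \<le> degree V E"
    using E(1) unfolding degree_def effective_def by (simp add: sum_nonneg)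
  then show ?thesis
    using lin_equiv_degree[OF E(2)] by simp
qed

definition removable :: "('v \<Rightarrow> int) \<Rightarrow> nat \<Rightarrow> bool" where
  "removable D r \<longleftrightarrow> (\<forall>E. is_divisor V E \<and> effective E \<and> degree V E = int r
     \<longrightarrow> equiv_effective V m (\<lambda>x. D x - E x))"

lemma rank_eq_Greatest_removable:
  "rank V m D = (if equiv_effective V m D then int (Greatest (removable D)) else -1)"
  unfolding rank_def removable_def by simp

lemma removable_point:
  assumes "removable D r" "q \<in> V"
  shows "equiv_effective V m (\<lambda>x. D x - point_divisor q (int r) x)"
  using assms(1) divisor_point_divisor[OF assms(2)] effective_point_divisor[of "int r" q]
    degree_point_divisor[OF finite_V assms(2)] unfolding removable_def by simp

lemma removable_imp_equiv_effective:
  assumes "removable D r"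
  shows "equiv_effective V m D"
proof -
  obtain q where q: "q \<in> V"
    using V_nonempty by blast
  from equiv_effective_add_effective[OF removable_point[OF assms q] effective_point_divisor[of "int r" q]]
  show ?thesis
    by simp
qed

lemma removable_le_degree:
  assumes "removable D r"
  shows "int r \<le> degree V D"
proof -
  obtain q where q: "q \<in> V"
    using V_nonempty by blast
  then show ?thesis
    using degree_nonneg_if_equiv_effective[OF removable_point[OF assms q]]
    by (simp add: degree_diff degree_point_divisor finite_V)
qed

lemma removable_mono:
  assumes "removable D R" "r \<le> R"
  shows "removable D r"
  unfolding removable_def
proof (intro allI impI)
  fix E assume E: "is_divisor V E \<and> effective E \<and> degree V E = int r"
  obtain q where q: "q \<in> V"
    using V_nonempty by blast
  define P where "P = point_divisor q (int (R - r))"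
  have "is_divisor V (\<lambda>x. E x + P x)"
    using E divisor_add divisor_point_divisor[OF q] unfolding P_def by blast
  moreover have "effective (\<lambda>x. E x + P x)"
    using E unfolding effective_def P_def point_divisor_def by simp
  moreover have "degree V (\<lambda>x. E x + P x) = int R"
    using E assms(2) unfolding P_def by (simp add: degree_add degree_point_divisor[OF finite_V q])
  ultimately have "equiv_effective V m (\<lambda>x. D x - (E x + P x))"
    using assms(1) unfolding removable_def by blast
  from equiv_effective_add_effective[OF this, of P]
  show "equiv_effective V m (\<lambda>x. D x - E x)"
    unfolding P_def by (simp add: effective_point_divisor)
qed

lemma removable_zero:
  assumes "is_divisor V D" "equiv_effective V m D"
  shows "removable D 0"
  unfolding removable_def
proof (intro allI impI)
  fix E assume E: "is_divisor V E \<and> effective E \<and> degree V E = int 0"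
  then have "\<forall>x\<in>V. E x = 0"
    using finite_V sum_nonneg_eq_0_iff[of V E] unfolding degree_def effective_def by auto
  then have "E = (\<lambda>_. 0)"
    using E unfolding is_divisor_def by auto
  then show "equiv_effective V m (\<lambda>x. D x - E x)"
    using assms by simp
qed

lemma rank_ge_iff_removable:
  assumes "is_divisor V D"
  shows "int r \<le> rank V m D \<longleftrightarrow> removable D r"
proof (cases "equiv_effective V m D")
  case True
  have bounded: "removable D s \<Longrightarrow> s \<le> nat (degree V D)" for s
    using removable_le_degree[of D s] by (metis nat_int nat_mono)
  have greatest: "removable D (Greatest (removable D))"
    using GreatestI_nat[of "removable D" 0 "nat (degree V D)"] removable_zero[OF assms True] bounded
    by blast
  have "int r \<le> rank V m D \<longleftrightarrow> r \<le> Greatest (removable D)"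
    using True by (simp add: rank_eq_Greatest_removable)
  also have "\<dots> \<longleftrightarrow> removable D r"
    using Greatest_le_nat[of "removable D" r "nat (degree V D)"] bounded
      removable_mono[OF greatest, of r] by blast
  finally show ?thesis .
next
  case False
  then have "\<not> removable D r"
    using removable_imp_equiv_effective by blast
  then show ?thesis
    using False by (simp add: rank_eq_Greatest_removable)
qed

lemma rank_ge_minus_1: "-1 \<le> rank V m D"
  by (simp add: rank_eq_Greatest_removable)

lemma rank_lin_equiv:
  assumes "lin_equiv V m D D'"
  shows "rank V m D = rank V m D'"
proof -
  have "lin_equiv V m (\<lambda>x. D x - E x) (\<lambda>x. D' x - E x)" for E
    using lin_equiv_add[OF assms, of "\<lambda>x. - E x"] by simp
  then have "removable D = removable D'"
    unfolding removable_def using equiv_effective_lin_equiv by (intro ext) blast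
  then show ?thesis
    using equiv_effective_lin_equiv[OF assms] by (simp add: rank_eq_Greatest_removable)
qed

lemma rank_negative_degree:
  assumes "is_divisor V D" "degree V D < 0"
  shows "rank V m D = -1"
  using rank_ge_iff_removable[OF assms(1), of 0] removable_imp_equiv_effective
    degree_nonneg_if_equiv_effective assms(2) rank_ge_minus_1[of D]
  by fastforce

lemma rank_ge_degree_minus_genus:
  assumes D: "is_divisor V D"
  shows "degree V D - int (genus V m) \<le> rank V m D"
proof (cases "int (genus V m) \<le> degree V D")
  case True
  have "removable D (nat (degree V D - int (genus V m)))"
    unfolding removable_def
  proof (intro allI impI)
    fix E assume "is_divisor V E \<and> effective E \<and> degree V E = int (nat (degree V D - int (genus V m)))"
    then have "is_divisor V (\<lambda>x. D x - E x)" "int (genus V m) \<le> degree V (\<lambda>x. D x - E x)"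
      using D True by (auto simp: divisor_diff degree_diff)
    then show "equiv_effective V m (\<lambda>x. D x - E x)"
      by (rule equiv_effective_if_genus_le_degree)
  qed
  then show ?thesis
    using rank_ge_iff_removable[OF D, of "nat (degree V D - int (genus V m))"] True by simp
next
  case False
  then show ?thesis
    using rank_ge_minus_1[of D] by linarith
qed

text \<open>Removing an effective divisor E equivalent to D - N, where N is not equivalent to an
  effective divisor, leaves the class of N.\<close>

lemma rank_le_degree_minus_genus:
  assumes D: "is_divisor V D" and deg: "2 * int (genus V m) - 1 \<le> degree V D"
  shows "rank V m D \<le> degree V D - int (genus V m)"
proof -
  define g where "g = int (genus V m)"
  have nonneg: "0 \<le> degree V D - g + 1"
    using deg g_def by simp
  obtain N where N: "is_divisor V N" "degree V N = g - 1" "\<not> equiv_effective V m N"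
    using ex_not_equiv_effective_degree_genus_minus_1 g_def by blast
  have "\<not> removable D (nat (degree V D - g + 1))"
  proof
    assume removable: "removable D (nat (degree V D - g + 1))"
    have "is_divisor V (\<lambda>x. D x - N x)" "g \<le> degree V (\<lambda>x. D x - N x)"
      using divisor_diff[OF D N(1)] N(2) deg g_def by (auto simp: degree_diff)
    then have "equiv_effective V m (\<lambda>x. D x - N x)"
      unfolding g_def by (rule equiv_effective_if_genus_le_degree)
    then obtain E where E: "effective E" "lin_equiv V m (\<lambda>x. D x - N x) E"
      unfolding equiv_effective_def by blast
    have "is_divisor V E" "degree V E = int (nat (degree V D - g + 1))"
      using lin_equiv_divisor[OF E(2)] divisor_diff[OF D N(1)] lin_equiv_degree[OF E(2)]
        N(2) nonneg by (auto simp: degree_diff)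
    then have "equiv_effective V m (\<lambda>x. D x - E x)"
      using removable E(1) unfolding removable_def by blast
    moreover have "lin_equiv V m (\<lambda>x. D x - E x) N"
      using lin_equiv_add[OF E(2), of "\<lambda>x. N x - E x"] by simp
    ultimately show False
      using N(3) equiv_effective_lin_equiv[of "\<lambda>x. D x - E x" N] by blast
  qed
  then show ?thesis
    using rank_ge_iff_removable[OF D, of "nat (degree V D - g + 1)"] nonneg g_def by simp
qed

lemma rank_large_degree:
  assumes "is_divisor V D" "2 * int (genus V m) - 1 \<le> degree V D"
  shows "rank V m D = degree V D - int (genus V m)"
  using rank_ge_degree_minus_genus[OF assms(1)] rank_le_degree_minus_genus[OF assms] by simp

end

section \<open>Transmission permutations\<close>

lemma mono_int_steps:
  fixes h :: "int \<Rightarrow> int"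
  assumes "\<And>x. h (x - 1) \<le> h x" "x \<le> y"
  shows "h x \<le> h y"
  using assms(2)
proof (induction y rule: int_ge_induct)
  case (step i)
  then show ?case
    using assms(1)[of "i + 1"] by simp
qed simp

lemma unit_jump_unique:
  fixes h :: "int \<Rightarrow> int"
  assumes steps: "\<And>x y. x \<le> y \<Longrightarrow> h x \<le> h y" and range: "\<And>x. 0 \<le> h x \<and> h x \<le> 1"
    and "h (a - 1) = 0" "h a = 1" "a' \<noteq> a"
  shows "h a' - h (a' - 1) = 0"
proof (cases "a < a'")
  case True
  then have "h a \<le> h a'" "h a \<le> h (a' - 1)"
    by (intro steps, linarith)+
  then show ?thesis
    using assms(4) range[of a'] range[of "a' - 1"] by linarith
next
  case False
  then have "h a' \<le> h (a - 1)" "h (a' - 1) \<le> h (a - 1)"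
    using assms(5) by (intro steps, linarith)+
  then show ?thesis
    using assms(3) range[of a'] range[of "a' - 1"] by linarith
qed

lemma unique_unit_jump:
  fixes h :: "int \<Rightarrow> int"
  assumes mono: "\<And>x. h (x - 1) \<le> h x"
    and low: "\<And>x. x \<le> lo \<Longrightarrow> h x = 0" and high: "\<And>x. hi \<le> x \<Longrightarrow> h x = 1"
  shows "\<exists>a. h a - h (a - 1) = 1 \<and> (\<forall>a'. a' \<noteq> a \<longrightarrow> h a' - h (a' - 1) = 0)"
proof -
  have steps: "x \<le> y \<Longrightarrow> h x \<le> h y" for x y
    using mono_int_steps[where h = h] mono by blast
  have range: "0 \<le> h x \<and> h x \<le> 1" for x
  proof -
    have "h (min x lo) \<le> h x" "h x \<le> h (max x hi)"
      by (intro steps, linarith)+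
    then show ?thesis
      using low[of "min x lo"] high[of "max x hi"] by simp
  qed
  obtain k where k: "1 \<le> h (lo + int k)" "\<And>k'. 1 \<le> h (lo + int k') \<Longrightarrow> k \<le> k'"
    using ex_has_least_nat[of "\<lambda>k. 1 \<le> h (lo + int k)" "nat (hi - lo)" id] high
    by (cases "lo \<le> hi") auto
  define a where "a = lo + int k"
  have "k \<noteq> 0"
    using k(1) low[of lo] by (cases k) auto
  have "\<not> 1 \<le> h (lo + int (k - 1))"
  proof
    assume "1 \<le> h (lo + int (k - 1))"
    then have "k \<le> k - 1"
      by (rule k(2))
    with \<open>k \<noteq> 0\<close> show False
      by simp
  qed
  moreover have "lo + int (k - 1) = a - 1"
    using \<open>k \<noteq> 0\<close> unfolding a_def by (simp add: of_nat_diff)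
  ultimately have h_before: "h (a - 1) = 0"
    using range[of "a - 1"] by simp
  have h_at: "h a = 1"
    using range[of a] k(1) unfolding a_def by simp
  have "h a - h (a - 1) = 1"
    using h_at h_before by simp
  then show ?thesis
    using unit_jump_unique[OF steps range h_before h_at] by blast
qed

definition mixed_diff :: "(int \<Rightarrow> int \<Rightarrow> int) \<Rightarrow> int \<Rightarrow> int \<Rightarrow> int" where
  "mixed_diff F a b = F a b - F (a - 1) b - F a (b + 1) + F (a - 1) (b + 1)"

lemma mixed_diff_transpose: "mixed_diff (\<lambda>a b. F (- b) (- a)) a b = mixed_diff F (- b) (- a)"
proof -
  have "- (a - 1) = - a + 1" "- (b + 1) = - b - 1"
    by simp_all
  then show ?thesis
    unfolding mixed_diff_def by (simp only:)
qed

text \<open>The value F a b models the rank of D + a u - b v for a divisor D of degree d on a graph of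
  genus g, with the Riemann-Roch bounds and submodularity as axioms.\<close>

locale rank_profile =
  fixes F :: "int \<Rightarrow> int \<Rightarrow> int" and d g :: int
  assumes negative: "d + a - b < 0 \<Longrightarrow> F a b = -1"
    and large: "2 * g - 1 \<le> d + a - b \<Longrightarrow> F a b = d + a - b - g"
    and submodular: "0 \<le> mixed_diff F a b"
begin

lemma ex1_row: "\<exists>a. mixed_diff F a b = 1 \<and> (\<forall>a'. a' \<noteq> a \<longrightarrow> mixed_diff F a' b = 0)"
proof -
  define h where "h = (\<lambda>a. F a b - F a (b + 1))"
  have "mixed_diff F a b = h a - h (a - 1)" for a
    unfolding mixed_diff_def h_def by simp
  moreover have "\<exists>a. h a - h (a - 1) = 1 \<and> (\<forall>a'. a' \<noteq> a \<longrightarrow> h a' - h (a' - 1) = 0)"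
  proof (rule unique_unit_jump)
    show "h (x - 1) \<le> h x" for x
      using submodular[of x b] unfolding mixed_diff_def h_def by simp
    show "h x = 0" if "x \<le> b - d - 1" for x
      using that negative[of x b] negative[of x "b + 1"] unfolding h_def by simp
    show "h x = 1" if "b - d + 2 * g \<le> x" for x
      using that large[of x b] large[of x "b + 1"] unfolding h_def by simp
  qed
  ultimately show ?thesis
    by simp
qed

lemma transpose: "rank_profile (\<lambda>a b. F (- b) (- a)) d g"
proof
  fix a b :: int
  show "d + a - b < 0 \<Longrightarrow> F (- b) (- a) = -1"
    using negative[of "- b" "- a"] by simp
  show "2 * g - 1 \<le> d + a - b \<Longrightarrow> F (- b) (- a) = d + a - b - g"
    using large[of "- b" "- a"] by simp
  show "0 \<le> mixed_diff (\<lambda>a b. F (- b) (- a)) a b"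
    using submodular[of "- b" "- a"] by (simp add: mixed_diff_transpose)
qed

lemma ex1_column: "\<exists>b. mixed_diff F a b = 1 \<and> (\<forall>b'. b' \<noteq> b \<longrightarrow> mixed_diff F a b' = 0)"
proof -
  interpret transposed: rank_profile "\<lambda>a b. F (- b) (- a)" d g
    by (rule transpose)
  have swap: "mixed_diff (\<lambda>a b. F (- b) (- a)) c (- a) = mixed_diff F a (- c)" for c
    by (simp add: mixed_diff_transpose)
  obtain c where c: "mixed_diff F a (- c) = 1" "\<forall>c'. c' \<noteq> c \<longrightarrow> mixed_diff F a (- c') = 0"
    using transposed.ex1_row[of "- a"] unfolding swap by blast
  show ?thesis
  proof (intro exI conjI allI impI)
    show "mixed_diff F a (- c) = 1"
      by (rule c(1))
    show "mixed_diff F a b' = 0" if "b' \<noteq> - c" for b'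
      using that c(2)[rule_format, of "- b'"] by simp
  qed
qed

lemma mixed_diff_window:
  assumes "mixed_diff F a b \<noteq> 0"
  shows "0 \<le> d + a - b \<and> d + a - b \<le> 2 * g"
proof (rule ccontr)
  assume "\<not> ?thesis"
  then consider "d + a - b < 0" | "2 * g < d + a - b"
    by linarith
  then show False
  proof cases
    case 1
    then show False
      using assms negative[of a b] negative[of "a - 1" b] negative[of a "b + 1"]
        negative[of "a - 1" "b + 1"] unfolding mixed_diff_def by simp
  next
    case 2
    then show False
      using assms large[of a b] large[of "a - 1" b] large[of a "b + 1"]
        large[of "a - 1" "b + 1"] unfolding mixed_diff_def by simp
  qed
qed

definition transmission :: "int \<Rightarrow> int" where
  "transmission b = (THE a. mixed_diff F a b = 1)"

lemma mixed_diff_transmission: "mixed_diff F a b = (if transmission b = a then 1 else 0)"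
proof -
  obtain a0 where a0: "mixed_diff F a0 b = 1" and others: "\<And>a'. a' \<noteq> a0 \<Longrightarrow> mixed_diff F a' b = 0"
    using ex1_row[of b] by blast
  have "transmission b = a0"
    unfolding transmission_def
  proof (rule the_equality)
    show "mixed_diff F a0 b = 1"
      by (rule a0)
    show "a' = a0" if "mixed_diff F a' b = 1" for a'
      using that others[of a'] by fastforce
  qed
  then show ?thesis
    using a0 others[of a] by auto
qed

lemma bij_transmission: "bij transmission"
proof (rule bijI)
  show "inj transmission"
  proof (rule injI)
    fix b b' assume "transmission b = transmission b'"
    then have "mixed_diff F (transmission b) b = 1" "mixed_diff F (transmission b) b' = 1"
      using mixed_diff_transmission[of _ b] mixed_diff_transmission[of _ b'] by simp_all
    moreover obtain b0 where "\<forall>b''. b'' \<noteq> b0 \<longrightarrow> mixed_diff F (transmission b) b'' = 0"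
      using ex1_column by blast
    ultimately show "b = b'"
      by (cases "b = b0"; cases "b' = b0") auto
  qed
  show "surj transmission"
    unfolding surj_def
  proof
    fix a
    obtain b where "mixed_diff F a b = 1"
      using ex1_column by blast
    then show "\<exists>b. a = transmission b"
      using mixed_diff_transmission[of a b] by (auto split: if_splits)
  qed
qed

lemma transmission_unique:
  assumes "\<forall>a b. (if \<tau> b = a then 1 else 0) = mixed_diff F a b"
  shows "\<tau> = transmission"
proof
  fix b
  have "mixed_diff F (\<tau> b) b = 1"
    using assms[rule_format, of b "\<tau> b"] by simp
  then show "\<tau> b = transmission b"
    using mixed_diff_transmission[of "\<tau> b" b] by (simp split: if_splits)
qed

lemma transmission_window: "0 \<le> d + transmission b - b \<and> d + transmission b - b \<le> 2 * g"
  using mixed_diff_window[of "transmission b" b] mixed_diff_transmission by simp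

lemma transmission_periodic:
  assumes "\<And>a b. F (a + k) (b + k) = F a b"
  shows "transmission (b + k) = transmission b + k"
proof -
  have "mixed_diff F (transmission b + k) (b + k) = mixed_diff F (transmission b) b"
    using assms[of "transmission b" b] assms[of "transmission b - 1" b]
      assms[of "transmission b" "b + 1"] assms[of "transmission b - 1" "b + 1"]
    unfolding mixed_diff_def by (simp add: algebra_simps)
  then have "mixed_diff F (transmission b + k) (b + k) = 1"
    using mixed_diff_transmission[of "transmission b" b] by simp
  then show ?thesis
    using mixed_diff_transmission[of "transmission b + k" "b + k"] by (simp split: if_splits)
qed

end

section \<open>Inversions of 2-periodic permutations\<close>

lemma shift_2_periodic_eq:
  fixes \<tau> :: "int \<Rightarrow> int"
  assumes per: "\<And>b. \<tau> (b + 2) = \<tau> b + 2"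
  shows "\<tau> x = (if even x then \<tau> 0 + x else \<tau> 1 + x - 1)"
proof -
  have shift: "\<tau> (2 * j + r) = \<tau> r + 2 * j" for j r :: int
  proof (induction j rule: int_induct[where k = 0])
    case base
    then show ?case by simp
  next
    case (step1 i)
    then show ?case
      using per[of "2 * i + r"] by (simp add: algebra_simps)
  next
    case (step2 i)
    then show ?case
      using per[of "2 * (i - 1) + r"] by (simp add: algebra_simps)
  qed
  show ?thesis
  proof (cases "even x")
    case True
    then obtain j where "x = 2 * j"
      by (rule evenE)
    then show ?thesis
      using shift[of j 0] True by simp
  next
    case False
    then obtain j where "x = 2 * j + 1"
      by (rule oddE)
    then show ?thesis
      using shift[of j 1] False by simp
  qed
qed

lemma k_equiv_rel_2_cong:
  assumes "(z, w) \<in> k_equiv_rel 2"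
  shows "(z, z') \<in> k_equiv_rel 2 \<longleftrightarrow> (w, z') \<in> k_equiv_rel 2"
  using assms by (cases z; cases w; cases z') (simp add: k_equiv_rel_def; presburger)

text \<open>For a permutation with tau (b + 2) = tau b + 2, every inversion joins the two parity
  classes, in a direction fixed by the sign of tau 0 - tau 1 + 1, and its class under
  2-equivalence is determined by its length.\<close>

definition canonical_inversion :: "(int \<Rightarrow> int) \<Rightarrow> nat \<Rightarrow> int \<times> int" where
  "canonical_inversion \<tau> j = (if \<tau> 1 < \<tau> 0 then (0, 2 * int j + 1) else (1, 2 * int j + 2))"

lemma inversion_equiv_canonical:
  fixes \<tau> :: "int \<Rightarrow> int" and G :: nat
  assumes per: "\<And>b. \<tau> (b + 2) = \<tau> b + 2" and window: "\<bar>\<tau> 0 - \<tau> 1 + 1\<bar> \<le> 2 * int G"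
    and inv: "(x, y) \<in> inversions \<tau>"
  shows "\<exists>j<G. ((x, y), canonical_inversion \<tau> j) \<in> k_equiv_rel 2
    \<and> canonical_inversion \<tau> j \<in> inversions \<tau>"
proof -
  define p where "p = \<tau> 0"
  define q where "q = \<tau> 1"
  have tau: "\<tau> z = (if even z then p + z else q + z - 1)" for z
    using shift_2_periodic_eq[of \<tau>, OF per] unfolding p_def q_def .
  have xy: "x < y" "\<tau> y < \<tau> x"
    using inv unfolding inversions_def by auto
  define j where "j = (y - x) div 2"
  have parity: "even x \<noteq> even y"
  proof
    assume "even x = even y"
    then have "\<tau> y - \<tau> x = y - x"
      using tau[of x] tau[of y] by auto
    then show False
      using xy by linarith
  qed
  then have d: "y - x = 2 * j + 1" "0 \<le> j"
    using xy(1) unfolding j_def by (auto elim!: oddE)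
  have j_less: "j < int G"
    using xy(2) window parity d tau[of x] tau[of y] unfolding p_def q_def by (auto split: if_splits)
  show ?thesis
  proof (intro exI conjI)
    show "nat j < G"
      using j_less d(2) by (simp add: nat_less_iff)
    show "((x, y), canonical_inversion \<tau> (nat j)) \<in> k_equiv_rel 2"
      using xy(2) parity d tau[of x] tau[of y]
      unfolding canonical_inversion_def k_equiv_rel_def p_def[symmetric] q_def[symmetric]
      by (auto split: if_splits elim!: evenE oddE)
    show "canonical_inversion \<tau> (nat j) \<in> inversions \<tau>"
      using xy(2) parity d tau[of x] tau[of y] tau[of "2 * j + 1"] tau[of "2 * j + 2"]
      unfolding canonical_inversion_def inversions_def by (auto simp: p_def q_def split: if_splits)
  qed
qed

lemma inv_k_2_le:
  fixes \<tau> :: "int \<Rightarrow> int" and G :: nat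
  assumes per: "\<And>b. \<tau> (b + 2) = \<tau> b + 2" and window: "\<bar>\<tau> 0 - \<tau> 1 + 1\<bar> \<le> 2 * int G"
  shows "inv_k 2 \<tau> \<le> enat G"
proof -
  define R where "R = k_equiv_rel 2 \<inter> (inversions \<tau> \<times> inversions \<tau>)"
  have classes: "inversions \<tau> // R \<subseteq> (\<lambda>j. R `` {canonical_inversion \<tau> j}) ` {..<G}"
  proof
    fix X assume "X \<in> inversions \<tau> // R"
    then obtain z where z: "z \<in> inversions \<tau>" "X = R `` {z}"
      unfolding quotient_def by blast
    then obtain j where j: "j < G" "(z, canonical_inversion \<tau> j) \<in> k_equiv_rel 2"
      "canonical_inversion \<tau> j \<in> inversions \<tau>"
      using inversion_equiv_canonical[OF per window] by (metis surj_pair)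
    have "R `` {z} = R `` {canonical_inversion \<tau> j}"
      using k_equiv_rel_2_cong[OF j(2)] z(1) j(3) unfolding R_def by auto
    then show "X \<in> (\<lambda>j. R `` {canonical_inversion \<tau> j}) ` {..<G}"
      using z(2) j(1) by blast
  qed
  then have "finite (inversions \<tau> // R)"
    by (rule finite_subset) simp
  moreover have "card (inversions \<tau> // R) \<le> G"
  proof -
    have "card (inversions \<tau> // R) \<le> card ((\<lambda>j. R `` {canonical_inversion \<tau> j}) ` {..<G})"
      using classes by (intro card_mono) simp_all
    also have "\<dots> \<le> G"
      using card_image_le[of "{..<G}"] by simp
    finally show ?thesis .
  qed
  ultimately show ?thesis
    unfolding inv_k_def Let_def R_def[symmetric] by simp
qed

lemma mixed_diff_rank_twist:
  "mixed_diff (\<lambda>a b. rank V m (twist u v D a (- b))) a b = Delta V m u v (twist u v D a (- b))"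
  unfolding mixed_diff_def Delta_def twist_twist by (simp add: algebra_simps)

lemma transmission_perm_eq_transmission:
  assumes "rank_profile (\<lambda>a b. rank V m (twist u v D a (- b))) d g"
  shows "transmission_perm V m u v D
    = rank_profile.transmission (\<lambda>a b. rank V m (twist u v D a (- b)))"
proof -
  interpret rank_profile "\<lambda>a b. rank V m (twist u v D a (- b))" d g
    by (rule assms)
  show ?thesis
    unfolding transmission_perm_def
  proof (rule the_equality)
    show "bij transmission \<and> (\<forall>a b. (if transmission b = a then 1 else 0)
        = Delta V m u v (twist u v D a (- b)))"
    proof (intro conjI allI)
      show "bij transmission"
        by (rule bij_transmission)
      show "(if transmission b = a then 1 else 0) = Delta V m u v (twist u v D a (- b))" for a b
        using mixed_diff_transmission[of a b] mixed_diff_rank_twist[of V m u v D a b] by simp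
    qed
    show "\<tau> = transmission" if "bij \<tau> \<and> (\<forall>a b. (if \<tau> b = a then 1 else 0)
        = Delta V m u v (twist u v D a (- b)))" for \<tau>
      using that by (intro transmission_unique) (simp add: mixed_diff_rank_twist)
  qed
qed

context multigraph
begin

lemma rank_profile_twist:
  assumes "u \<in> V" "v \<in> V" "is_divisor V D" "submodular V m u v D"
  shows "rank_profile (\<lambda>a b. rank V m (twist u v D a (- b))) (degree V D) (int (genus V m))"
proof
  fix a b :: int
  have D': "is_divisor V (twist u v D a (- b))" "degree V (twist u v D a (- b)) = degree V D + a - b"
    using divisor_twist[OF assms(1-3)] degree_twist[OF finite_V assms(1,2)] by auto
  show "degree V D + a - b < 0 \<Longrightarrow> rank V m (twist u v D a (- b)) = -1"
    using rank_negative_degree D' by simp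
  show "2 * int (genus V m) - 1 \<le> degree V D + a - b
      \<Longrightarrow> rank V m (twist u v D a (- b)) = degree V D + a - b - int (genus V m)"
    using rank_large_degree D' by simp
  show "0 \<le> mixed_diff (\<lambda>a b. rank V m (twist u v D a (- b))) a b"
    using assms(4) unfolding mixed_diff_rank_twist submodular_def by blast
qed

lemma rank_twist_periodic:
  assumes "lin_equiv V m (twist u v (\<lambda>_. 0) k 0) (twist u v (\<lambda>_. 0) 0 k)"
  shows "rank V m (twist u v D (a + k) (- (b + k))) = rank V m (twist u v D a (- b))"
proof -
  have "lin_equiv V m (\<lambda>x. twist u v (\<lambda>_. 0) k 0 x + twist u v D a (- b - k) x)
      (\<lambda>x. twist u v (\<lambda>_. 0) 0 k x + twist u v D a (- b - k) x)"
    using lin_equiv_add[OF assms] .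
  moreover have "(\<lambda>x. twist u v (\<lambda>_. 0) k 0 x + twist u v D a (- b - k) x)
      = twist u v D (a + k) (- (b + k))"
    by (simp add: twist_def fun_eq_iff)
  moreover have "(\<lambda>x. twist u v (\<lambda>_. 0) 0 k x + twist u v D a (- b - k) x) = twist u v D a (- b)"
    by (simp add: twist_def fun_eq_iff)
  ultimately show ?thesis
    using rank_lin_equiv by simp
qed

lemma inv_k_2_transmission_perm_le:
  assumes "u \<in> V" "v \<in> V" "is_divisor V D" "submodular V m u v D"
    and "lin_equiv V m (twist u v (\<lambda>_. 0) 2 0) (twist u v (\<lambda>_. 0) 0 2)"
  shows "inv_k 2 (transmission_perm V m u v D) \<le> enat (genus V m)"
proof -
  let ?F = "\<lambda>a b. rank V m (twist u v D a (- b))"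
  interpret rank_profile ?F "degree V D" "int (genus V m)"
    using rank_profile_twist[OF assms(1-4)] .
  have periodic: "transmission (b + 2) = transmission b + 2" for b
    by (rule transmission_periodic, rule rank_twist_periodic[OF assms(5)])
  have window: "\<bar>transmission 0 - transmission 1 + 1\<bar> \<le> 2 * int (genus V m)"
    using transmission_window[of 0] transmission_window[of 1] by linarith
  have transmission_perm: "transmission_perm V m u v D = transmission"
    using rank_profile_twist[OF assms(1-4)] by (rule transmission_perm_eq_transmission)
  show ?thesis
    unfolding transmission_perm by (rule inv_k_2_le[of transmission, OF periodic window])
qed

end

theorem mainTheorem12:
  fixes V :: "'v set" and m :: "'v \<Rightarrow> 'v \<Rightarrow> nat" and u v :: 'v
  assumes "is_graph V m" and "u \<in> V" and "v \<in> V"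
    and "has_torsion_order V m u v 2"
    and "\<forall>D. is_divisor V D \<longrightarrow> submodular V m u v D"
  shows "k_general_transmission V m u v 2"
proof -
  interpret multigraph V m
    by (rule multigraph.intro) (rule assms(1))
  have torsion: "lin_equiv V m (twist u v (\<lambda>_. 0) 2 0) (twist u v (\<lambda>_. 0) 0 2)"
    using assms(4) unfolding has_torsion_order_def by simp
  show ?thesis
    unfolding k_general_transmission_def
  proof (intro conjI allI impI)
    show "lin_equiv V m (twist u v (\<lambda>_. 0) (int 2) 0) (twist u v (\<lambda>_. 0) 0 (int 2))"
      using torsion by simp
    show "submodular V m u v D" if "is_divisor V D" for D
      using assms(5) that by blast
    then show "inv_k 2 (transmission_perm V m u v D) \<le> enat (genus V m)" if "is_divisor V D" for D
      using inv_k_2_transmission_perm_le[OF assms(2,3) that _ torsion] that by blast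
  qed
qed

end
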